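(* Let $m\ge1$, let $p_1,\dots,p_m\ge 0$ with $p_1+\cdots+p_m=1$, and let $S$ be a finite nonempty word on $[m]$ all of whose letters have positive probability. Roll a die showing face $i$ with probability $p_i$ independently until $S$ first appears as a block of consecutive outcomes, and let $Y$ be the number of rolls. Then \[ \operatorname{Var}(Y) = E(Y^2)-E(Y)^2 = \left(\sum_{R\in\operatorname{overlap}(S)} \frac{1}{P(R)} \right)^2 + \sum_{R\in\operatorname{overlap}(S)} \frac{(1-|R|)^2-|R|^2}{P(R)}. \]
   Context: For a word $w=w_1\cdots w_\ell$, $|w|=\ell$ and $P(w)=p_{w_1}\cdots p_{w_\ell}$. An overlap of $S$ is a nonempty word that is both a prefix and a suffix of $S$ (including $S$ itself); $\operatorname{overlap}(S)$ is the set of overlaps. *)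

theory Defs
  imports "HOL-Probability.Probability" "HOL-Library.Sublist"
begin

definition die :: "nat \<Rightarrow> (nat \<Rightarrow> real) \<Rightarrow> nat pmf" where
  "die m p = embed_pmf (\<lambda>i. if i \<in> {1..m} then p i else 0)"

definition rolls :: "nat \<Rightarrow> (nat \<Rightarrow> real) \<Rightarrow> nat stream measure" where
  "rolls m p = stream_space (measure_pmf (die m p))"

definition wait_time :: "nat list \<Rightarrow> nat stream \<Rightarrow> nat" where
  "wait_time S \<omega> = (LEAST n. length S \<le> n \<and> drop (n - length S) (stake n \<omega>) = S)"

definition wprob :: "(nat \<Rightarrow> real) \<Rightarrow> nat list \<Rightarrow> real" where
  "wprob p w = prod_list (map p w)"

definition overlap :: "'a list \<Rightarrow> 'a list set" where
  "overlap S = {R. R \<noteq> [] \<and> prefix R S \<and> suffix R S}"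

end

theory Submission
  imports Defs
begin

(* If S has not occurred among the first n rolls and the rolls
   n+1, ..., n+|S| spell S, then the first occurrence of S ends inside this block, at n+|R| for
   a unique overlap R of S, and is followed by the remaining letters of S.  Since disjoint blocks
   of rolls are independent, this gives P(Y > n) P(S) = sum_R P(Y = n+|R|) P(S)/P(R).
   Multiplying by g(n) >= 0 and summing over n yields E[sum_{k<Y} g(k)] = sum_R E[g(Y-|R|)]/P(R).
   For g = 1 the right-hand side is finite, so Y is almost surely finite and E(Y) = sum_R 1/P(R);
   for g(k) = 2k+1 it gives E(Y^2) = sum_R (2 E(Y) - 2|R| + 1)/P(R), and the variance follows. *)

section \<open>Independence of the rolls\<close>

definition sprefix :: "'a list \<Rightarrow> 'a stream \<Rightarrow> bool" where
  "sprefix w \<omega> \<longleftrightarrow> stake (length w) \<omega> = w"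

lemma sprefix_Nil [simp]: "sprefix [] \<omega>"
  by (simp add: sprefix_def)

lemma sprefix_Cons [simp]: "sprefix (x # w) \<omega> \<longleftrightarrow> shd \<omega> = x \<and> sprefix w (stl \<omega>)"
  by (simp add: sprefix_def)

lemma sprefix_append: "sprefix (u @ v) \<omega> \<longleftrightarrow> sprefix u \<omega> \<and> sprefix v (sdrop (length u) \<omega>)"
  by (induction u arbitrary: \<omega>) auto

lemma sprefix_iff_snth: "sprefix w \<omega> \<longleftrightarrow> (\<forall>i<length w. \<omega> !! i = w ! i)"
  by (induction w arbitrary: \<omega>) (auto simp: nth_Cons split: nat.split)

lemma sprefix_same_length: "sprefix u \<omega> \<Longrightarrow> sprefix v \<omega> \<Longrightarrow> length u = length v \<Longrightarrow> u = v"
  by (simp add: sprefix_def)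

lemma prob_space_stream_space_pmf: "prob_space (stream_space (measure_pmf D))"
  by (rule prob_space.prob_space_stream_space[OF prob_space_measure_pmf])

lemma measurable_stake_pmf [measurable]:
  "stake n \<in> measurable (stream_space (measure_pmf (D :: 'a::countable pmf))) (count_space UNIV)"
  by (subst measurable_cong_sets[OF sets_stream_space_cong[OF sets_measure_pmf_count_space] refl])
     (rule measurable_stake)

lemma measurable_stream_space_pmf_prefix_determined:
  fixes f :: "'a::countable stream \<Rightarrow> 'b"
  assumes "space N = UNIV"
    and "\<And>\<omega> \<omega>'. (\<And>i. i < n \<Longrightarrow> \<omega> !! i = \<omega>' !! i) \<Longrightarrow> f \<omega> = f \<omega>'"
  shows "f \<in> measurable (stream_space (measure_pmf D)) N"
proof -
  fix s :: "'a stream"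
  have "f = (\<lambda>\<omega>. f (stake n \<omega> @- s))"
    by (intro ext assms(2)) (simp add: shift_snth_less)
  also have "\<dots> \<in> measurable (stream_space (measure_pmf D)) N"
    by (rule measurable_compose[OF measurable_stake_pmf]) (simp add: assms(1))
  finally show ?thesis .
qed

lemma nn_integral_stream_space_pmf_sdrop:
  fixes f h :: "'a::countable stream \<Rightarrow> ennreal"
  assumes h: "h \<in> borel_measurable (stream_space (measure_pmf D))"
    and f: "\<And>\<omega> \<omega>'. (\<And>i. i < n \<Longrightarrow> \<omega> !! i = \<omega>' !! i) \<Longrightarrow> f \<omega> = f \<omega>'"
  shows "(\<integral>\<^sup>+\<omega>. f \<omega> * h (sdrop n \<omega>) \<partial>stream_space (measure_pmf D))
       = (\<integral>\<^sup>+\<omega>. f \<omega> \<partial>stream_space (measure_pmf D)) * (\<integral>\<^sup>+\<omega>. h \<omega> \<partial>stream_space (measure_pmf D))"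
  using f
proof (induction n arbitrary: f)
  case 0
  interpret prob_space "stream_space (measure_pmf D)"
    by (rule prob_space_stream_space_pmf)
  fix \<omega>\<^sub>0
  have "f = (\<lambda>_. f \<omega>\<^sub>0)"
    by (rule ext, rule "0.prems") simp
  then obtain c where "f = (\<lambda>_. c)" ..
  with "0.prems" h show ?case
    by (simp add: nn_integral_cmult emeasure_space_1)
next
  case (Suc n)
  have f_Stream: "f (x ## \<omega>) = f (x ## \<omega>')" if "\<And>i. i < n \<Longrightarrow> \<omega> !! i = \<omega>' !! i" for x \<omega> \<omega>'
    by (rule Suc.prems) (auto simp: that Stream_snth split: nat.split)
  have [measurable]: "f \<in> borel_measurable (stream_space (measure_pmf D))"
    by (rule measurable_stream_space_pmf_prefix_determined[OF _ Suc.prems]) simp_all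
  have "(\<integral>\<^sup>+\<omega>. f \<omega> * h (sdrop (Suc n) \<omega>) \<partial>stream_space (measure_pmf D))
      = (\<integral>\<^sup>+x. (\<integral>\<^sup>+\<omega>. f (x ## \<omega>) * h (sdrop n \<omega>) \<partial>stream_space (measure_pmf D)) \<partial>measure_pmf D)"
    using h by (subst prob_space.nn_integral_stream_space[OF prob_space_measure_pmf]) simp_all
  also have "\<dots> = (\<integral>\<^sup>+x. (\<integral>\<^sup>+\<omega>. f (x ## \<omega>) \<partial>stream_space (measure_pmf D))
                       * (\<integral>\<^sup>+\<omega>. h \<omega> \<partial>stream_space (measure_pmf D)) \<partial>measure_pmf D)"
    using Suc.IH[OF f_Stream] by simp
  also have "\<dots> = (\<integral>\<^sup>+x. (\<integral>\<^sup>+\<omega>. f (x ## \<omega>) \<partial>stream_space (measure_pmf D)) \<partial>measure_pmf D)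
                  * (\<integral>\<^sup>+\<omega>. h \<omega> \<partial>stream_space (measure_pmf D))"
    by (rule nn_integral_multc) simp
  also have "(\<integral>\<^sup>+x. (\<integral>\<^sup>+\<omega>. f (x ## \<omega>) \<partial>stream_space (measure_pmf D)) \<partial>measure_pmf D)
           = (\<integral>\<^sup>+\<omega>. f \<omega> \<partial>stream_space (measure_pmf D))"
    by (subst prob_space.nn_integral_stream_space[OF prob_space_measure_pmf]) simp_all
  finally show ?case .
qed

lemma measurable_sprefix [measurable]:
  "Measurable.pred (stream_space (measure_pmf (D :: 'a::countable pmf))) (sprefix w)"
  by (rule measurable_stream_space_pmf_prefix_determined[where n = "length w"])
     (simp_all add: sprefix_iff_snth)

lemma nn_integral_stream_space_pmf_sprefix:
  "(\<integral>\<^sup>+\<omega>. of_bool (sprefix w \<omega>) \<partial>stream_space (measure_pmf (D :: 'a::countable pmf)))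
     = ennreal (prod_list (map (pmf D) w))"
proof (induction w)
  case Nil
  interpret prob_space "stream_space (measure_pmf D)"
    by (rule prob_space_stream_space_pmf)
  show ?case
    by (simp add: emeasure_space_1)
next
  case (Cons x w)
  have measurable: "(\<lambda>\<omega>. of_bool (sprefix (x # w) \<omega>) :: ennreal) \<in> borel_measurable (stream_space (measure_pmf D))"
    by measurable
  have "(\<integral>\<^sup>+\<omega>. of_bool (sprefix (x # w) \<omega>) \<partial>stream_space (measure_pmf D))
      = (\<integral>\<^sup>+y. indicator {x} y * (\<integral>\<^sup>+\<omega>. of_bool (sprefix w \<omega>) \<partial>stream_space (measure_pmf D)) \<partial>measure_pmf D)"
    by (subst prob_space.nn_integral_stream_space[OF prob_space_measure_pmf measurable])
       (auto intro!: nn_integral_cong simp: nn_integral_cmult[symmetric] split: split_indicator)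
  also have "\<dots> = ennreal (pmf D x) * ennreal (prod_list (map (pmf D) w))"
    by (simp add: Cons.IH nn_integral_multc emeasure_pmf_single)
  also have "\<dots> = ennreal (prod_list (map (pmf D) (x # w)))"
    by (simp add: ennreal_mult')
  finally show ?case .
qed

lemma nn_integral_stream_space_pmf_sprefix_sdrop:
  fixes P :: "'a::countable stream \<Rightarrow> bool"
  assumes "\<And>\<omega> \<omega>'. (\<And>i. i < n \<Longrightarrow> \<omega> !! i = \<omega>' !! i) \<Longrightarrow> P \<omega> \<longleftrightarrow> P \<omega>'"
  shows "(\<integral>\<^sup>+\<omega>. of_bool (P \<omega> \<and> sprefix w (sdrop n \<omega>)) \<partial>stream_space (measure_pmf D))
       = (\<integral>\<^sup>+\<omega>. of_bool (P \<omega>) \<partial>stream_space (measure_pmf D)) * ennreal (prod_list (map (pmf D) w))"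
proof -
  have "(\<integral>\<^sup>+\<omega>. of_bool (P \<omega>) * of_bool (sprefix w (sdrop n \<omega>)) \<partial>stream_space (measure_pmf D))
      = (\<integral>\<^sup>+\<omega>. of_bool (P \<omega>) \<partial>stream_space (measure_pmf D))
        * (\<integral>\<^sup>+\<omega>. of_bool (sprefix w \<omega>) \<partial>stream_space (measure_pmf D))"
  proof (rule nn_integral_stream_space_pmf_sdrop)
    fix \<omega> \<omega>' :: "'a stream"
    assume "\<And>i. i < n \<Longrightarrow> \<omega> !! i = \<omega>' !! i"
    then have "P \<omega> \<longleftrightarrow> P \<omega>'"
      by (rule assms)
    then show "of_bool (P \<omega>) = (of_bool (P \<omega>') :: ennreal)"
      by simp
  qed measurable
  then show ?thesis
    by (simp add: of_bool_conj nn_integral_stream_space_pmf_sprefix)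
qed

section \<open>Occurrences of a pattern\<close>

(* S occupies the rolls i - |S|, ..., i - 1 (counting from 0), i.e. it is completed by roll
   number i; this matches the convention of wait_time. *)
definition occurs_at :: "'a list \<Rightarrow> nat \<Rightarrow> 'a stream \<Rightarrow> bool" where
  "occurs_at S i \<omega> \<longleftrightarrow> length S \<le> i \<and> sprefix S (sdrop (i - length S) \<omega>)"

definition avoids_upto :: "'a list \<Rightarrow> nat \<Rightarrow> 'a stream \<Rightarrow> bool" where
  "avoids_upto S n \<omega> \<longleftrightarrow> (\<forall>i\<le>n. \<not> occurs_at S i \<omega>)"

definition first_occurs_at :: "'a list \<Rightarrow> nat \<Rightarrow> 'a stream \<Rightarrow> bool" where
  "first_occurs_at S j \<omega> \<longleftrightarrow> occurs_at S j \<omega> \<and> (\<forall>i<j. \<not> occurs_at S i \<omega>)"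

lemma wait_time_eq_Least_occurs_at: "wait_time S \<omega> = (LEAST n. occurs_at S n \<omega>)"
proof -
  have "length S \<le> n \<and> drop (n - length S) (stake n \<omega>) = S \<longleftrightarrow> occurs_at S n \<omega>" for n
    by (cases "length S \<le> n") (simp_all add: occurs_at_def sprefix_def drop_stake)
  then show ?thesis
    by (simp add: wait_time_def)
qed

lemma occurs_at_cong:
  assumes "\<And>i. i < n \<Longrightarrow> \<omega> !! i = \<omega>' !! i" and "j \<le> n"
  shows "occurs_at S j \<omega> \<longleftrightarrow> occurs_at S j \<omega>'"
  using assms by (auto simp: occurs_at_def sprefix_iff_snth sdrop_snth)

lemma avoids_upto_cong:
  "(\<And>i. i < n \<Longrightarrow> \<omega> !! i = \<omega>' !! i) \<Longrightarrow> avoids_upto S n \<omega> \<longleftrightarrow> avoids_upto S n \<omega>'"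
  unfolding avoids_upto_def using occurs_at_cong[of n \<omega> \<omega>'] by auto

lemma first_occurs_at_cong:
  "(\<And>i. i < j \<Longrightarrow> \<omega> !! i = \<omega>' !! i) \<Longrightarrow> first_occurs_at S j \<omega> \<longleftrightarrow> first_occurs_at S j \<omega>'"
  unfolding first_occurs_at_def using occurs_at_cong[of j \<omega> \<omega>'] by auto

lemma avoids_upto_iff_less_Least:
  "occurs_at S i \<omega> \<Longrightarrow> avoids_upto S n \<omega> \<longleftrightarrow> n < (LEAST j. occurs_at S j \<omega>)"
  unfolding avoids_upto_def by (meson exists_least_iff' linorder_not_le order.strict_trans1)

lemma first_occurs_at_iff_Least:
  "occurs_at S i \<omega> \<Longrightarrow> first_occurs_at S j \<omega> \<longleftrightarrow> j = (LEAST j. occurs_at S j \<omega>)"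
  unfolding first_occurs_at_def by (metis exists_least_iff' nat_neq_iff)

lemma first_occurs_at_unique: "first_occurs_at S i \<omega> \<Longrightarrow> first_occurs_at S j \<omega> \<Longrightarrow> i = j"
  unfolding first_occurs_at_def by (metis linorder_neqE_nat)

lemma finite_overlap: "finite (overlap S)"
  by (rule finite_subset[of _ "set (prefixes S)"]) (auto simp: overlap_def)

lemma overlap_length_le: "R \<in> overlap S \<Longrightarrow> length R \<le> length S"
  by (simp add: overlap_def prefix_length_le)

lemma overlap_set_subset: "R \<in> overlap S \<Longrightarrow> set R \<subseteq> set S"
  by (simp add: overlap_def set_mono_prefix)

lemma overlap_eq_if_same_length:
  "R \<in> overlap S \<Longrightarrow> R' \<in> overlap S \<Longrightarrow> length R = length R' \<Longrightarrow> R = R'"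
  unfolding overlap_def by (metis (lifting) append_eq_append_conv mem_Collect_eq suffix_def)

(* The last |R| letters of the first occurrence are the first |R| letters of the block
   starting at n, so R is both a prefix and a suffix of S. *)
lemma first_occurs_in_block:
  assumes avoids: "avoids_upto S n \<omega>" and block: "sprefix S (sdrop n \<omega>)"
  shows "\<exists>R\<in>overlap S. first_occurs_at S (n + length R) \<omega>
                      \<and> sprefix (drop (length R) S) (sdrop (n + length R) \<omega>)"
proof -
  let ?k = "length S"
  define J where "J = (LEAST j. occurs_at S j \<omega>)"
  have occ: "occurs_at S (n + ?k) \<omega>"
    using block by (simp add: occurs_at_def)
  have first: "first_occurs_at S J \<omega>"
    unfolding J_def using first_occurs_at_iff_Least[OF occ] by simp
  have "n < J"
    unfolding J_def using avoids avoids_upto_iff_less_Least[OF occ] by simp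
  have "J \<le> n + ?k"
    unfolding J_def using occ by (rule Least_le)
  define l where "l = J - n"
  have l: "0 < l" "l \<le> ?k" "J = n + l"
    using \<open>n < J\<close> \<open>J \<le> n + ?k\<close> by (auto simp: l_def)
  have head: "sprefix (take l S) (sdrop n \<omega>)"
    and tail: "sprefix (drop l S) (sdrop (n + l) \<omega>)"
    using block l sprefix_append[of "take l S" "drop l S" "sdrop n \<omega>"] by simp_all
  have "?k \<le> J" and "sprefix S (sdrop (J - ?k) \<omega>)"
    using first by (simp_all add: first_occurs_at_def occurs_at_def)
  then have "sprefix (drop (?k - l) S) (sdrop n \<omega>)"
    using l sprefix_append[of "take (?k - l) S" "drop (?k - l) S" "sdrop (J - ?k) \<omega>"] by simp
  with head l have "take l S = drop (?k - l) S"
    by (intro sprefix_same_length) auto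
  then have "suffix (take l S) S"
    by (metis suffix_drop)
  then have "take l S \<in> overlap S"
    using l by (auto simp: overlap_def take_is_prefix)
  with first tail l show ?thesis
    by (intro bexI[of _ "take l S"]) auto
qed

lemma avoids_upto_sprefix_sdrop_if_first_occurs:
  assumes R: "R \<in> overlap S"
    and first: "first_occurs_at S (n + length R) \<omega>"
    and tail: "sprefix (drop (length R) S) (sdrop (n + length R) \<omega>)"
  shows "avoids_upto S n \<omega> \<and> sprefix S (sdrop n \<omega>)"
proof -
  from R have "R \<noteq> []" "prefix R S" "suffix R S"
    by (simp_all add: overlap_def)
  then obtain zs where "S = zs @ R"
    by (auto simp: suffix_def)
  from \<open>prefix R S\<close> have "S = R @ drop (length R) S"
    by (auto simp: prefix_def)
  have "i < n + length R" if "i \<le> n" for i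
    using that \<open>R \<noteq> []\<close> by (simp add: le_less_trans)
  then have "avoids_upto S n \<omega>"
    using first by (simp add: avoids_upto_def first_occurs_at_def)
  moreover have "sprefix (zs @ R) (sdrop (n + length R - length S) \<omega>)" "length S \<le> n + length R"
    using first \<open>S = zs @ R\<close> by (auto simp: first_occurs_at_def occurs_at_def)
  then have "sprefix R (sdrop n \<omega>)"
    using \<open>S = zs @ R\<close> by (simp add: sprefix_append)
  with tail have "sprefix (R @ drop (length R) S) (sdrop n \<omega>)"
    by (simp add: sprefix_append)
  ultimately show ?thesis
    using \<open>S = R @ drop (length R) S\<close> by simp
qed

lemma avoids_upto_sprefix_sdrop_iff:
  "avoids_upto S n \<omega> \<and> sprefix S (sdrop n \<omega>) \<longleftrightarrow>
     (\<exists>R\<in>overlap S. first_occurs_at S (n + length R) \<omega>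
                    \<and> sprefix (drop (length R) S) (sdrop (n + length R) \<omega>))"
  using first_occurs_in_block avoids_upto_sprefix_sdrop_if_first_occurs by blast

lemma sum_of_bool_eq_of_bool_Bex:
  assumes "finite A" and "\<And>x y. x \<in> A \<Longrightarrow> y \<in> A \<Longrightarrow> P x \<Longrightarrow> P y \<Longrightarrow> x = y"
  shows "(\<Sum>x\<in>A. of_bool (P x)) = (of_bool (\<exists>x\<in>A. P x) :: 'b::semiring_1)"
proof (cases "\<exists>x\<in>A. P x")
  case True
  then obtain x where "x \<in> A" "P x" by blast
  with assms(2) have "A \<inter> {x. P x} = {x}" by blast
  with assms(1) True show ?thesis by (simp add: sum_of_bool_eq)
next
  case False
  then show ?thesis by simp
qed

lemma of_bool_avoids_upto_sprefix_sdrop: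
  "(of_bool (avoids_upto S n \<omega> \<and> sprefix S (sdrop n \<omega>)) :: 'b::semiring_1) =
     (\<Sum>R\<in>overlap S. of_bool (first_occurs_at S (n + length R) \<omega>
                              \<and> sprefix (drop (length R) S) (sdrop (n + length R) \<omega>)))"
proof -
  have "R = R'" if "R \<in> overlap S" "R' \<in> overlap S"
    and "first_occurs_at S (n + length R) \<omega>" "first_occurs_at S (n + length R') \<omega>" for R R'
    using overlap_eq_if_same_length[OF that(1,2)] first_occurs_at_unique[OF that(3,4)] by simp
  then show ?thesis
    by (subst sum_of_bool_eq_of_bool_Bex) (auto simp: finite_overlap avoids_upto_sprefix_sdrop_iff)
qed

lemma measurable_occurs_at [measurable]:
  "Measurable.pred (stream_space (measure_pmf (D :: 'a::countable pmf))) (occurs_at S i)"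
  by (rule measurable_stream_space_pmf_prefix_determined[where n = i], simp)
     (rule occurs_at_cong[OF _ order_refl])

lemma measurable_avoids_upto [measurable]:
  "Measurable.pred (stream_space (measure_pmf (D :: 'a::countable pmf))) (avoids_upto S n)"
  by (rule measurable_stream_space_pmf_prefix_determined[where n = n], simp)
     (rule avoids_upto_cong)

lemma measurable_first_occurs_at [measurable]:
  "Measurable.pred (stream_space (measure_pmf (D :: 'a::countable pmf))) (first_occurs_at S j)"
  by (rule measurable_stream_space_pmf_prefix_determined[where n = j], simp)
     (rule first_occurs_at_cong)

section \<open>Moments of the waiting time\<close>

lemma sum_of_odd_eq_square: "(\<Sum>n<N. 2 * real n + 1) = real N ^ 2"
  by (induction N) (auto simp: power2_eq_square algebra_simps)

locale pattern_wait =
  fixes D :: "'a::countable pmf" and S :: "'a list"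
  assumes pmf_pattern_pos: "\<And>x. x \<in> set S \<Longrightarrow> 0 < pmf D x"
begin

abbreviation M :: "'a stream measure" where
  "M \<equiv> stream_space (measure_pmf D)"

sublocale prob_space M
  by (rule prob_space_stream_space_pmf)

abbreviation word_prob :: "'a list \<Rightarrow> real" where
  "word_prob w \<equiv> prod_list (map (pmf D) w)"

(* LEAST over an empty set: the value 0 when S never occurs is junk, but that event is null
   by AE_occurs. *)
abbreviation waiting_time :: "'a stream \<Rightarrow> nat" where
  "waiting_time \<omega> \<equiv> LEAST n. occurs_at S n \<omega>"

lemma word_prob_pos: "set w \<subseteq> set S \<Longrightarrow> 0 < word_prob w"
  by (induction w) (auto simp: pmf_pattern_pos)

lemma word_prob_overlap_pos: "R \<in> overlap S \<Longrightarrow> 0 < word_prob R"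
  by (intro word_prob_pos overlap_set_subset)

lemma nn_integral_avoids_upto:
  "(\<integral>\<^sup>+\<omega>. of_bool (avoids_upto S n \<omega>) \<partial>M) =
     (\<Sum>R\<in>overlap S. ennreal (1 / word_prob R) * (\<integral>\<^sup>+\<omega>. of_bool (first_occurs_at S (n + length R) \<omega>) \<partial>M))"
proof -
  have word_prob_drop: "ennreal (word_prob (drop (length R) S)) = ennreal (1 / word_prob R) * ennreal (word_prob S)"
    if "R \<in> overlap S" for R
  proof -
    have "word_prob S = word_prob R * word_prob (drop (length R) S)"
      using that by (auto simp: overlap_def prefix_def)
    then show ?thesis
      using word_prob_overlap_pos[OF that] by (simp add: ennreal_mult'[symmetric])
  qed
  have "(\<integral>\<^sup>+\<omega>. of_bool (avoids_upto S n \<omega>) \<partial>M) * ennreal (word_prob S)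
      = (\<integral>\<^sup>+\<omega>. of_bool (avoids_upto S n \<omega> \<and> sprefix S (sdrop n \<omega>)) \<partial>M)"
    by (rule nn_integral_stream_space_pmf_sprefix_sdrop[symmetric]) (rule avoids_upto_cong)
  also have "\<dots> = (\<Sum>R\<in>overlap S. \<integral>\<^sup>+\<omega>. of_bool (first_occurs_at S (n + length R) \<omega>
                    \<and> sprefix (drop (length R) S) (sdrop (n + length R) \<omega>)) \<partial>M)"
    by (simp add: of_bool_avoids_upto_sprefix_sdrop nn_integral_sum)
  also have "\<dots> = (\<Sum>R\<in>overlap S. (\<integral>\<^sup>+\<omega>. of_bool (first_occurs_at S (n + length R) \<omega>) \<partial>M)
                    * ennreal (word_prob (drop (length R) S)))"
    by (intro sum.cong refl nn_integral_stream_space_pmf_sprefix_sdrop) (rule first_occurs_at_cong)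
  also have "\<dots> = (\<Sum>R\<in>overlap S. ennreal (1 / word_prob R)
                    * (\<integral>\<^sup>+\<omega>. of_bool (first_occurs_at S (n + length R) \<omega>) \<partial>M)) * ennreal (word_prob S)"
    unfolding sum_distrib_right by (intro sum.cong refl) (simp add: word_prob_drop mult_ac)
  finally show ?thesis
    using word_prob_pos[of S] by (simp add: mult_right_ennreal_cancel)
qed

lemma nn_integral_suminf_avoids_upto:
  "(\<integral>\<^sup>+\<omega>. (\<Sum>n. f n * of_bool (avoids_upto S n \<omega>)) \<partial>M) =
     (\<Sum>R\<in>overlap S. ennreal (1 / word_prob R) *
        (\<integral>\<^sup>+\<omega>. (\<Sum>n. f n * of_bool (first_occurs_at S (n + length R) \<omega>)) \<partial>M))"
proof -
  have "(\<integral>\<^sup>+\<omega>. (\<Sum>n. f n * of_bool (avoids_upto S n \<omega>)) \<partial>M)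
      = (\<Sum>n. f n * (\<integral>\<^sup>+\<omega>. of_bool (avoids_upto S n \<omega>) \<partial>M))"
    by (simp add: nn_integral_suminf nn_integral_cmult)
  also have "\<dots> = (\<Sum>n. \<Sum>R\<in>overlap S. ennreal (1 / word_prob R)
                      * (f n * (\<integral>\<^sup>+\<omega>. of_bool (first_occurs_at S (n + length R) \<omega>) \<partial>M)))"
    by (simp add: nn_integral_avoids_upto sum_distrib_left mult_ac)
  also have "\<dots> = (\<Sum>R\<in>overlap S. \<Sum>n. ennreal (1 / word_prob R)
                      * (f n * (\<integral>\<^sup>+\<omega>. of_bool (first_occurs_at S (n + length R) \<omega>) \<partial>M)))"
    by (rule suminf_sum) simp
  also have "\<dots> = (\<Sum>R\<in>overlap S. ennreal (1 / word_prob R) *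
                      (\<integral>\<^sup>+\<omega>. (\<Sum>n. f n * of_bool (first_occurs_at S (n + length R) \<omega>)) \<partial>M))"
    by (simp add: ennreal_suminf_cmult nn_integral_suminf nn_integral_cmult)
  finally show ?thesis .
qed

lemma suminf_avoids_upto:
  assumes "occurs_at S i \<omega>"
  shows "(\<Sum>n. f n * of_bool (avoids_upto S n \<omega>)) = (\<Sum>n<waiting_time \<omega>. f n :: ennreal)"
  by (subst suminf_finite[of "{..<waiting_time \<omega>}"]) (simp_all add: avoids_upto_iff_less_Least[OF assms])

lemma suminf_first_occurs_at:
  fixes f :: "nat \<Rightarrow> ennreal"
  assumes "occurs_at S i \<omega>"
  shows "(\<Sum>n. f n * of_bool (first_occurs_at S (n + l) \<omega>)) = f (waiting_time \<omega> - l) * of_bool (l \<le> waiting_time \<omega>)"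
  by (subst suminf_finite[of "{waiting_time \<omega> - l}"])
     (auto simp: first_occurs_at_iff_Least[OF assms])

lemma AE_occurs: "AE \<omega> in M. \<exists>i. occurs_at S i \<omega>"
proof -
  let ?N = "\<lambda>\<omega>. \<Sum>n. 1 * of_bool (avoids_upto S n \<omega>) :: ennreal"
  have "(\<Sum>n. 1 * of_bool (first_occurs_at S (n + l) \<omega>) :: ennreal) \<le> 1" for l \<omega>
  proof (cases "\<exists>i. occurs_at S i \<omega>")
    case True
    then obtain i where "occurs_at S i \<omega>" ..
    then show ?thesis
      using suminf_first_occurs_at[of i \<omega> "\<lambda>_. 1" l] by simp
  next
    case False
    then show ?thesis
      by (simp add: first_occurs_at_def)
  qed
  then have "(\<integral>\<^sup>+\<omega>. (\<Sum>n. 1 * of_bool (first_occurs_at S (n + l) \<omega>)) \<partial>M) \<le> (\<integral>\<^sup>+\<omega>. 1 \<partial>M)" for l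
    by (intro nn_integral_mono)
  then have "(\<integral>\<^sup>+\<omega>. ?N \<omega> \<partial>M) \<le> (\<Sum>R\<in>overlap S. ennreal (1 / word_prob R) * 1)"
    unfolding nn_integral_suminf_avoids_upto
    by (intro sum_mono mult_left_mono) (simp_all add: emeasure_space_1)
  also have "\<dots> = ennreal (\<Sum>R\<in>overlap S. 1 / word_prob R)"
    by (simp add: sum_ennreal less_imp_le word_prob_overlap_pos)
  finally have "AE \<omega> in M. ?N \<omega> \<noteq> \<infinity>"
    by (intro nn_integral_PInf_AE) (auto simp: top_unique)
  moreover have "?N \<omega> = \<infinity>" if "\<forall>i. \<not> occurs_at S i \<omega>" for \<omega>
    using that by (simp add: avoids_upto_def suminf_eq_SUP ennreal_SUP_of_nat_eq_top)
  ultimately show ?thesis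
    by (elim eventually_mono) blast
qed

lemma occurs_at_waiting_time:
  assumes "occurs_at S i \<omega>"
  shows "occurs_at S (waiting_time \<omega>) \<omega>" and "length S \<le> waiting_time \<omega>"
proof -
  show "occurs_at S (waiting_time \<omega>) \<omega>"
    using assms by (rule LeastI)
  then show "length S \<le> waiting_time \<omega>"
    by (simp add: occurs_at_def)
qed

lemma AE_length_le_waiting_time: "AE \<omega> in M. length S \<le> waiting_time \<omega>"
  using AE_occurs by (elim eventually_mono) (blast intro: occurs_at_waiting_time(2))

lemma nn_integral_sum_less_waiting_time:
  assumes "\<And>n. 0 \<le> g n"
  shows "(\<integral>\<^sup>+\<omega>. ennreal (\<Sum>n<waiting_time \<omega>. g n) \<partial>M) =
           (\<Sum>R\<in>overlap S. ennreal (1 / word_prob R) * (\<integral>\<^sup>+\<omega>. ennreal (g (waiting_time \<omega> - length R)) \<partial>M))"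
proof -
  have "(\<integral>\<^sup>+\<omega>. ennreal (\<Sum>n<waiting_time \<omega>. g n) \<partial>M) = (\<integral>\<^sup>+\<omega>. (\<Sum>n. ennreal (g n) * of_bool (avoids_upto S n \<omega>)) \<partial>M)"
    using AE_occurs
    by (intro nn_integral_cong_AE) (auto elim!: eventually_mono simp: suminf_avoids_upto sum_ennreal assms)
  also have "\<dots> = (\<Sum>R\<in>overlap S. ennreal (1 / word_prob R) *
                     (\<integral>\<^sup>+\<omega>. (\<Sum>n. ennreal (g n) * of_bool (first_occurs_at S (n + length R) \<omega>)) \<partial>M))"
    by (rule nn_integral_suminf_avoids_upto)
  also have "\<dots> = (\<Sum>R\<in>overlap S. ennreal (1 / word_prob R) * (\<integral>\<^sup>+\<omega>. ennreal (g (waiting_time \<omega> - length R)) \<partial>M))"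
  proof (intro sum.cong refl arg_cong2[where f = times] nn_integral_cong_AE)
    fix R assume "R \<in> overlap S"
    then have "length R \<le> length S"
      by (rule overlap_length_le)
    show "AE \<omega> in M. (\<Sum>n. ennreal (g n) * of_bool (first_occurs_at S (n + length R) \<omega>))
                         = ennreal (g (waiting_time \<omega> - length R))"
      using AE_occurs AE_length_le_waiting_time
      by eventually_elim (use \<open>length R \<le> length S\<close> in \<open>auto simp: suminf_first_occurs_at\<close>)
  qed
  finally show ?thesis .
qed

abbreviation mean_waiting_time :: real where
  "mean_waiting_time \<equiv> \<Sum>R\<in>overlap S. 1 / word_prob R"

lemma measurable_waiting_time [measurable]: "(\<lambda>\<omega>. waiting_time \<omega>) \<in> measurable M (count_space UNIV)"
  by measurable

lemma has_bochner_integral_waiting_time: "has_bochner_integral M (\<lambda>\<omega>. real (waiting_time \<omega>)) mean_waiting_time"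
proof (rule has_bochner_integral_nn_integral)
  have "(\<integral>\<^sup>+\<omega>. ennreal (real (waiting_time \<omega>)) \<partial>M) = (\<integral>\<^sup>+\<omega>. ennreal (\<Sum>n<waiting_time \<omega>. 1) \<partial>M)"
    by simp
  also have "\<dots> = (\<Sum>R\<in>overlap S. ennreal (1 / word_prob R))"
    by (subst nn_integral_sum_less_waiting_time) (simp_all add: emeasure_space_1)
  also have "\<dots> = ennreal mean_waiting_time"
    by (simp add: sum_ennreal less_imp_le word_prob_overlap_pos)
  finally show "(\<integral>\<^sup>+\<omega>. ennreal (real (waiting_time \<omega>)) \<partial>M) = ennreal mean_waiting_time" .
qed (auto intro!: sum_nonneg divide_nonneg_pos word_prob_overlap_pos)

lemma has_bochner_integral_odd_waiting_time_diff:
  assumes "l \<le> length S"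
  shows "has_bochner_integral M (\<lambda>\<omega>. 2 * real (waiting_time \<omega> - l) + 1) (2 * (mean_waiting_time - l) + 1)"
proof -
  have "has_bochner_integral M (\<lambda>_. c) c" for c :: real
    using has_bochner_integral_integrable[of M "\<lambda>_. c"] by (simp add: prob_space)
  then have "has_bochner_integral M (\<lambda>\<omega>. 2 * (real (waiting_time \<omega>) - l) + 1) (2 * (mean_waiting_time - l) + 1)"
    by (intro has_bochner_integral_add has_bochner_integral_mult_right has_bochner_integral_diff
              has_bochner_integral_waiting_time)
  moreover have "AE \<omega> in M. 2 * (real (waiting_time \<omega>) - l) + 1 = 2 * real (waiting_time \<omega> - l) + 1"
    using AE_length_le_waiting_time by (elim eventually_mono) (use assms in auto)
  ultimately show ?thesis
    by (subst (asm) has_bochner_integral_cong_AE) simp_all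
qed

lemma has_bochner_integral_waiting_time_sq:
  "has_bochner_integral M (\<lambda>\<omega>. real (waiting_time \<omega>)^2)
     (\<Sum>R\<in>overlap S. (2 * (mean_waiting_time - length R) + 1) / word_prob R)"
proof (rule has_bochner_integral_nn_integral)
  have odd: "0 \<le> 2 * (mean_waiting_time - length R) + 1"
    and nn_odd: "(\<integral>\<^sup>+\<omega>. ennreal (2 * real (waiting_time \<omega> - length R) + 1) \<partial>M)
                   = ennreal (2 * (mean_waiting_time - length R) + 1)"
    if "R \<in> overlap S" for R
  proof -
    have integrable: "integrable M (\<lambda>\<omega>. 2 * real (waiting_time \<omega> - length R) + 1)"
      and expectation: "expectation (\<lambda>\<omega>. 2 * real (waiting_time \<omega> - length R) + 1)
                          = 2 * (mean_waiting_time - length R) + 1"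
      using has_bochner_integral_odd_waiting_time_diff[OF overlap_length_le[OF that]]
      by (simp_all add: has_bochner_integral_iff)
    show "0 \<le> 2 * (mean_waiting_time - length R) + 1"
      unfolding expectation[symmetric] by (rule integral_nonneg_AE) simp
    show "(\<integral>\<^sup>+\<omega>. ennreal (2 * real (waiting_time \<omega> - length R) + 1) \<partial>M)
            = ennreal (2 * (mean_waiting_time - length R) + 1)"
      unfolding expectation[symmetric] by (rule nn_integral_eq_integral[OF integrable]) simp
  qed
  have "(\<integral>\<^sup>+\<omega>. ennreal (real (waiting_time \<omega>)^2) \<partial>M)
      = (\<integral>\<^sup>+\<omega>. ennreal (\<Sum>n<waiting_time \<omega>. 2 * real n + 1) \<partial>M)"
    by (simp add: sum_of_odd_eq_square)
  also have "\<dots> = (\<Sum>R\<in>overlap S. ennreal (1 / word_prob R)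
                      * (\<integral>\<^sup>+\<omega>. ennreal (2 * real (waiting_time \<omega> - length R) + 1) \<partial>M))"
    by (rule nn_integral_sum_less_waiting_time) simp
  also have "\<dots> = (\<Sum>R\<in>overlap S. ennreal (1 / word_prob R) * ennreal (2 * (mean_waiting_time - length R) + 1))"
    by (intro sum.cong refl) (metis nn_odd)
  also have "\<dots> = (\<Sum>R\<in>overlap S. ennreal ((2 * (mean_waiting_time - length R) + 1) / word_prob R))"
    by (intro sum.cong refl) (simp add: ennreal_mult'[symmetric] word_prob_overlap_pos less_imp_le)
  also have "\<dots> = ennreal (\<Sum>R\<in>overlap S. (2 * (mean_waiting_time - length R) + 1) / word_prob R)"
    by (rule sum_ennreal) (intro divide_nonneg_pos odd word_prob_overlap_pos)
  finally show "(\<integral>\<^sup>+\<omega>. ennreal (real (waiting_time \<omega>)^2) \<partial>M) = ennreal (\<Sum>R\<in>overlap S. (2 * (mean_waiting_time - length R) + 1) / word_prob R)" .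
  show "0 \<le> (\<Sum>R\<in>overlap S. (2 * (mean_waiting_time - length R) + 1) / word_prob R)"
    by (intro sum_nonneg divide_nonneg_pos odd word_prob_overlap_pos)
qed auto

lemma integrable_waiting_time: "integrable M (\<lambda>\<omega>. real (waiting_time \<omega>))"
  and expectation_waiting_time: "expectation (\<lambda>\<omega>. real (waiting_time \<omega>)) = mean_waiting_time"
  using has_bochner_integral_waiting_time by (simp_all add: has_bochner_integral_iff)

lemma integrable_waiting_time_sq: "integrable M (\<lambda>\<omega>. real (waiting_time \<omega>)^2)"
  and expectation_waiting_time_sq:
    "expectation (\<lambda>\<omega>. real (waiting_time \<omega>)^2)
       = (\<Sum>R\<in>overlap S. (2 * (mean_waiting_time - length R) + 1) / word_prob R)"
  using has_bochner_integral_waiting_time_sq by (simp_all add: has_bochner_integral_iff)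

theorem variance_waiting_time:
  "variance (\<lambda>\<omega>. real (waiting_time \<omega>))
     = expectation (\<lambda>\<omega>. real (waiting_time \<omega>)^2) - (expectation (\<lambda>\<omega>. real (waiting_time \<omega>)))^2"
  "expectation (\<lambda>\<omega>. real (waiting_time \<omega>)^2) - (expectation (\<lambda>\<omega>. real (waiting_time \<omega>)))^2
     = mean_waiting_time^2 + (\<Sum>R\<in>overlap S. ((1 - real (length R))^2 - (real (length R))^2) / word_prob R)"
proof -
  show "variance (\<lambda>\<omega>. real (waiting_time \<omega>))
     = expectation (\<lambda>\<omega>. real (waiting_time \<omega>)^2) - (expectation (\<lambda>\<omega>. real (waiting_time \<omega>)))^2"
    by (rule variance_eq[OF integrable_waiting_time integrable_waiting_time_sq])
  have summand: "(2 * (mean_waiting_time - l) + 1) / P = 2 * mean_waiting_time * (1 / P) + ((1 - l)^2 - l^2) / P"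
    for l P :: real
    by (simp add: power2_eq_square add_divide_distrib diff_divide_distrib algebra_simps)
  show "expectation (\<lambda>\<omega>. real (waiting_time \<omega>)^2) - (expectation (\<lambda>\<omega>. real (waiting_time \<omega>)))^2
     = mean_waiting_time^2 + (\<Sum>R\<in>overlap S. ((1 - real (length R))^2 - (real (length R))^2) / word_prob R)"
    unfolding expectation_waiting_time expectation_waiting_time_sq summand sum.distrib
      sum_distrib_left[symmetric]
    by (simp add: power2_eq_square)
qed

end

lemma pmf_die:
  assumes "\<And>i. i \<in> {1..m} \<Longrightarrow> p i \<ge> 0" and "(\<Sum>i=1..m. p i) = 1"
  shows "pmf (die m p) i = (if i \<in> {1..m} then p i else 0)"
  unfolding die_def
proof (rule pmf_embed_pmf)
  have "(\<integral>\<^sup>+i. ennreal (if i \<in> {1..m} then p i else 0) \<partial>count_space UNIV)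
      = (\<Sum>i\<in>{1..m}. ennreal (p i))"
    by (subst nn_integral_count_space'[of "{1..m}"]) auto
  also have "\<dots> = 1"
    using assms by (subst sum_ennreal) auto
  finally show "(\<integral>\<^sup>+i. ennreal (if i \<in> {1..m} then p i else 0) \<partial>count_space UNIV) = 1" .
qed (use assms in auto)

theorem corollary4p11:
  fixes m :: nat and p :: "nat \<Rightarrow> real" and S :: "nat list"
  assumes "m \<ge> 1"
    and "\<And>i. i \<in> {1..m} \<Longrightarrow> p i \<ge> 0"
    and "(\<Sum>i=1..m. p i) = 1"
    and "S \<noteq> []"
    and "\<And>x. x \<in> set S \<Longrightarrow> x \<in> {1..m} \<and> p x > 0"
  shows
    "(let M = rolls m p; Y = (\<lambda>\<omega>. real (wait_time S \<omega>));
          EY = (\<integral>\<omega>. Y \<omega> \<partial>M); EY2 = (\<integral>\<omega>. (Y \<omega>)^2 \<partial>M);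
          VarY = (\<integral>\<omega>. (Y \<omega> - EY)^2 \<partial>M)
      in VarY = EY2 - EY^2 \<and>
         EY2 - EY^2 = (\<Sum>R\<in>overlap S. 1 / wprob p R)^2
                     + (\<Sum>R\<in>overlap S. ((1 - real (length R))^2 - (real (length R))^2) / wprob p R))"
proof -
  \<comment> \<open>m \<ge> 1 follows from the sum condition, and for S = [] both sides vanish.\<close>
  have pmf_letter: "pmf (die m p) x = p x" if "x \<in> set S" for x
    using assms(5)[OF that] pmf_die[OF assms(2,3), of x] by simp
  interpret pattern_wait "die m p" S
    using assms(4,5) pmf_letter by unfold_locales auto
  have wprob_overlap: "wprob p R = word_prob R" if "R \<in> overlap S" for R
    using overlap_set_subset[OF that] pmf_letter unfolding wprob_def
    by (metis map_eq_conv subsetD)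
  show ?thesis
    unfolding Let_def rolls_def wait_time_eq_Least_occurs_at variance_waiting_time
    using wprob_overlap by (simp cong: sum.cong)
qed

end
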